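(* Let $f:\mathbb{N}\to\mathbb{R}$ with $f(1)=1$. Assume $f(n)=0$ for all even $n$ and there exist $C>0$ and $\gamma\in\mathbb{R}$ such that $|f(n)|\leq Cn^\gamma$ for all $n\geq2$. Then $$|f^{-1}(n)|\leq n^{\gamma+\varsigma}, \quad n\geq2,$$ where $\varsigma>1$ is the unique root of $\left(1-2^{-s}\right)\zeta(s)=\frac{1}{C}+1$. In particular, if $C=1$, then $\varsigma=\eta=1.37779\dots$
   Context: $f^{-1}$ denotes the Dirichlet inverse of $f$: the arithmetic function with $\sum_{d\mid n} f(n/d) f^{-1}(d)=\varepsilon(n)$ for all $n$, where $\varepsilon(1)=1$ and $\varepsilon(n)=0$ for $n\ge2$. $\zeta$ is the Riemann zeta function. *)

theory Defs
  imports "HOL-Analysis.Analysis"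
begin

text \<open>Arithmetic functions are modelled as functions nat => real; the value at 0 is irrelevant.
  g is the Dirichlet inverse of f iff sum over d dvd n of f(n/d) g(d) equals epsilon(n) for all n >= 1.\<close>
definition is_dirichlet_inverse :: "(nat \<Rightarrow> real) \<Rightarrow> (nat \<Rightarrow> real) \<Rightarrow> bool" where
  "is_dirichlet_inverse f g \<longleftrightarrow>
     (\<forall>n\<ge>1. (\<Sum>d | d dvd n. f (n div d) * g d) = (if n = 1 then 1 else 0))"

definition zeta_real :: "real \<Rightarrow> real" where
  "zeta_real s = (\<Sum>n. 1 / (real (Suc n) powr s))"

end

theory Submission
  imports Defs
begin

text \<open>Removing the Euler factor at 2 turns (1 - 2^-s) \<zeta>(s) into the odd zeta series
  \<Sum>_k (2k+1)^-s, which decreases strictly and continuously on (1, \<infinity>) from +\<infinity> towards 1,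
  so it takes the value 1/C + 1 exactly once.
  For the bound, g(n) = - \<Sum> f(d) g(n/d) over the divisors d > 1 of n. By strong induction each
  term is at most C d^\<gamma> (n/d)^(\<gamma>+\<sigma>) = C n^(\<gamma>+\<sigma>) d^-\<sigma>, and only odd d \<ge> 3 contribute,
  so the sum is at most C n^(\<gamma>+\<sigma>) (\<Sum>_k (2k+1)^-\<sigma> - 1) = n^(\<gamma>+\<sigma>).\<close>

definition odd_zeta :: "real \<Rightarrow> real" where
  "odd_zeta s = (\<Sum>k. 1 / real (2 * k + 1) powr s)"

lemma summable_zeta_real_terms:
  assumes "s > 1"
  shows "summable (\<lambda>n. 1 / real (Suc n) powr s)"
proof -
  have "summable (\<lambda>n. real n powr (-s))"
    using summable_real_powr_iff[of "-s"] assms by simp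
  then have "summable (\<lambda>n. real (Suc n) powr (-s))"
    by (subst summable_Suc_iff)
  then show ?thesis
    by (simp add: powr_minus_divide)
qed

lemma summable_odd_zeta_terms:
  assumes "s > 1"
  shows "summable (\<lambda>k. 1 / real (2 * k + 1) powr s)"
proof (rule summable_comparison_test'[OF summable_zeta_real_terms[OF assms]])
  show "norm (1 / real (2 * k + 1) powr s) \<le> 1 / real (Suc k) powr s" for k
    using assms by (auto intro!: divide_left_mono powr_mono2)
qed

lemma sums_odd_zeta_minus_1:
  assumes "s > 1"
  shows "(\<lambda>k. 1 / real (2 * k + 3) powr s) sums (odd_zeta s - 1)"
  using sums_Suc_iff[of "\<lambda>k. 1 / real (2 * k + 1) powr s"] summable_odd_zeta_terms[OF assms]
  by (simp add: odd_zeta_def summable_sums eval_nat_numeral algebra_simps)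

lemma odd_zeta_eq_zeta_real:
  assumes "s > 1"
  shows "odd_zeta s = (1 - 2 powr (-s)) * zeta_real s"
proof -
  define a where "a n = 1 / real (Suc n) powr s" for n
  have a_even: "a (2 * n) = 1 / real (2 * n + 1) powr s" for n
    unfolding a_def by simp
  have a_odd: "a (2 * n + 1) = 2 powr (-s) * a n" for n
  proof -
    have "real (Suc (2 * n + 1)) powr s = 2 powr s * real (Suc n) powr s"
      using powr_mult[of 2 "real (Suc n)" s] by simp
    then show ?thesis
      unfolding a_def by (simp add: powr_minus_divide)
  qed
  have zeta: "(\<lambda>n. \<Sum>i<n. a i) \<longlonglongrightarrow> zeta_real s"
    using summable_LIMSEQ[OF summable_zeta_real_terms[OF assms]]
    unfolding a_def zeta_real_def by simp
  have "((\<lambda>n. \<Sum>i<n. a i) \<circ> (\<lambda>n. 2 * n)) \<longlonglongrightarrow> zeta_real s"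
    by (rule LIMSEQ_subseq_LIMSEQ[OF zeta]) (auto simp: strict_mono_def)
  then have "(\<lambda>n. (\<Sum>i<n. a (2 * i)) + (\<Sum>i<n. a (2 * i + 1))) \<longlonglongrightarrow> zeta_real s"
    using sum_split_even_odd[of a a] by (simp add: o_def)
  moreover have "(\<lambda>n. (\<Sum>i<n. a (2 * i)) + (\<Sum>i<n. a (2 * i + 1)))
      \<longlonglongrightarrow> odd_zeta s + 2 powr (-s) * zeta_real s"
  proof (rule tendsto_add)
    show "(\<lambda>n. \<Sum>i<n. a (2 * i)) \<longlonglongrightarrow> odd_zeta s"
      unfolding a_even odd_zeta_def
      using summable_LIMSEQ[OF summable_odd_zeta_terms[OF assms]] .
    show "(\<lambda>n. \<Sum>i<n. a (2 * i + 1)) \<longlonglongrightarrow> 2 powr (-s) * zeta_real s"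
      unfolding a_odd sum_distrib_left[symmetric] by (intro tendsto_mult tendsto_const zeta)
  qed
  ultimately have "zeta_real s = odd_zeta s + 2 powr (-s) * zeta_real s"
    by (rule LIMSEQ_unique)
  then show ?thesis
    by (simp add: algebra_simps)
qed

lemma odd_zeta_strict_antimono:
  assumes "1 < s" "s < t"
  shows "odd_zeta t < odd_zeta s"
proof -
  have "0 < (\<Sum>k. 1 / real (2 * k + 1) powr s - 1 / real (2 * k + 1) powr t)"
  proof (rule suminf_pos2)
    show "summable (\<lambda>k. 1 / real (2 * k + 1) powr s - 1 / real (2 * k + 1) powr t)"
      using summable_odd_zeta_terms assms by (intro summable_diff) auto
    show "0 \<le> 1 / real (2 * k + 1) powr s - 1 / real (2 * k + 1) powr t" for k
      using assms by (simp add: divide_left_mono powr_mono)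
    have "(3::real) powr s < 3 powr t"
      using assms by (intro powr_less_mono) auto
    then show "0 < 1 / real (2 * 1 + 1) powr s - 1 / real (2 * 1 + 1) powr t"
      by (simp add: field_simps)
  qed
  also have "\<dots> = odd_zeta s - odd_zeta t"
    unfolding odd_zeta_def using summable_odd_zeta_terms assms
    by (intro suminf_diff[symmetric]) auto
  finally show ?thesis
    by simp
qed

lemma continuous_on_odd_zeta:
  assumes "a > 1"
  shows "continuous_on {a..} odd_zeta"
proof -
  have "uniform_limit {a..} (\<lambda>n s. \<Sum>k<n. 1 / real (2 * k + 1) powr s) odd_zeta sequentially"
    unfolding odd_zeta_def[abs_def]
  proof (rule Weierstrass_m_test[OF _ summable_odd_zeta_terms[OF assms]])
    show "norm (1 / real (2 * k + 1) powr s) \<le> 1 / real (2 * k + 1) powr a" if "s \<in> {a..}" for k s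
      using that assms by (auto intro!: divide_left_mono powr_mono)
  qed
  then show ?thesis
    by (rule uniform_limit_theorem[rotated]) (auto intro!: always_eventually continuous_intros)
qed

lemma not_summable_odd_harmonic: "\<not> summable (\<lambda>k. 1 / real (2 * k + 1))"
proof
  assume "summable (\<lambda>k. 1 / real (2 * k + 1))"
  then have "summable (\<lambda>k. 2 * (1 / real (2 * k + 1)))"
    by (rule summable_mult)
  moreover have "norm (inverse (real (Suc k))) \<le> 2 * (1 / real (2 * k + 1))" for k
    by (simp add: field_simps)
  ultimately have "summable (\<lambda>k. inverse (real (Suc k)))"
    by (rule summable_comparison_test'[where N = 0])
  then have "summable (\<lambda>k. inverse (real k))"
    by (subst (asm) summable_Suc_iff)
  then show False
    using not_summable_harmonic[where 'a = real] by simp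
qed

lemma ex_odd_zeta_greater: "\<exists>s>1. y < odd_zeta s"
proof -
  have "\<not> (\<forall>n. (\<Sum>k\<le>n. 1 / real (2 * k + 1)) \<le> y)"
    using not_summable_odd_harmonic bounded_imp_summable[of "\<lambda>k. 1 / real (2 * k + 1)" y]
    by auto
  then obtain N where N: "y < (\<Sum>k\<le>N. 1 / real (2 * k + 1))"
    by (auto simp: not_le)
  define P where "P s = (\<Sum>k\<le>N. 1 / real (2 * k + 1) powr s)" for s
  have "isCont P 1"
    unfolding P_def by (intro continuous_intros) auto
  then have "(P \<longlongrightarrow> P 1) (at_right 1)"
    unfolding isCont_def by (rule tendsto_mono[OF at_within_le_at])
  moreover have "y < P 1"
    using N unfolding P_def by simp
  ultimately have "eventually (\<lambda>s. y < P s) (at_right 1)"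
    by (rule order_tendstoD(1))
  then obtain s where s: "s > 1" "y < P s"
    using eventually_happens'[OF _ eventually_conj[OF eventually_at_right_less]] by force
  have "P s \<le> odd_zeta s"
    unfolding P_def odd_zeta_def by (rule sum_le_suminf[OF summable_odd_zeta_terms[OF s(1)]]) auto
  with s show ?thesis
    by auto
qed

lemma odd_zeta_tail_le:
  assumes "1 < s" "s \<le> t"
  shows "odd_zeta t - 1 \<le> (odd_zeta s - 1) / 3 powr (t - s)"
proof (rule sums_le[OF _ sums_odd_zeta_minus_1 sums_divide[OF sums_odd_zeta_minus_1]])
  show "1 / real (2 * k + 3) powr t \<le> 1 / real (2 * k + 3) powr s / 3 powr (t - s)" for k
  proof -
    have "real (2 * k + 3) powr s * 3 powr (t - s)
        \<le> real (2 * k + 3) powr s * real (2 * k + 3) powr (t - s)"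
      using assms by (intro mult_left_mono powr_mono2) auto
    also have "\<dots> = real (2 * k + 3) powr t"
      by (simp add: powr_add[symmetric])
    finally show ?thesis
      by (simp add: divide_left_mono)
  qed
qed (use assms in auto)

lemma ex_odd_zeta_less:
  assumes "y > 1"
  shows "\<exists>t>1. odd_zeta t < y"
proof -
  obtain n where n: "(odd_zeta 2 - 1) / (y - 1) < 3 ^ n"
    using real_arch_pow[of 3] by auto
  have "odd_zeta (n + 2) - 1 \<le> (odd_zeta 2 - 1) / 3 ^ n"
    using odd_zeta_tail_le[of 2 "n + 2"] by (simp add: powr_realpow)
  also have "\<dots> < y - 1"
    using n assms by (simp add: field_simps)
  finally show ?thesis
    by (intro exI[of _ "real (n + 2)"]) auto
qed

lemma odd_zeta_eq_unique:
  assumes "y > 1"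
  shows "\<exists>!\<sigma>. \<sigma> > 1 \<and> odd_zeta \<sigma> = y"
proof -
  obtain s where s: "s > 1" "y < odd_zeta s"
    using ex_odd_zeta_greater by blast
  obtain t where t: "t > 1" "odd_zeta t < y"
    using ex_odd_zeta_less[OF assms] by blast
  have "s \<le> t"
    using odd_zeta_strict_antimono[of t s] s t by force
  moreover have "continuous_on {s..t} odd_zeta"
    using continuous_on_subset[OF continuous_on_odd_zeta[OF s(1)]] by auto
  ultimately obtain \<sigma> where "s \<le> \<sigma>" "odd_zeta \<sigma> = y"
    using IVT2'[of odd_zeta t y s] s t by force
  moreover have "\<rho> = \<sigma>" if "\<rho> > 1" "odd_zeta \<rho> = y" "\<sigma> > 1" "odd_zeta \<sigma> = y" for \<rho> \<sigma>
    using odd_zeta_strict_antimono[of \<rho> \<sigma>] odd_zeta_strict_antimono[of \<sigma> \<rho>] that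
    by (cases \<rho> \<sigma> rule: linorder_cases) auto
  ultimately show ?thesis
    using s by (intro ex1I[of _ \<sigma>]) auto
qed

lemma sum_odd_powr_le_odd_zeta:
  assumes "s > 1"
  shows "(\<Sum>m=2..n. of_bool (odd m) / real m powr s) \<le> odd_zeta s - 1"
proof -
  have "(\<Sum>m=2..n. of_bool (odd m) / real m powr s) = (\<Sum>m | m \<in> {2..n} \<and> odd m. 1 / real m powr s)"
    by (subst sum.inter_filter) (auto intro!: sum.cong)
  also have "\<dots> \<le> (\<Sum>m \<in> (\<lambda>k. 2 * k + 3) ` {..<n}. 1 / real m powr s)"
  proof (intro sum_mono2 subsetI)
    fix m
    assume "m \<in> {m \<in> {2..n}. odd m}"
    then have "m = 2 * ((m - 3) div 2) + 3" "(m - 3) div 2 < n"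
      by (auto elim!: oddE)
    then show "m \<in> (\<lambda>k. 2 * k + 3) ` {..<n}"
      by blast
  qed auto
  also have "\<dots> = (\<Sum>k<n. 1 / real (2 * k + 3) powr s)"
    by (subst sum.reindex) (auto simp: inj_on_def)
  also have "\<dots> \<le> odd_zeta s - 1"
    unfolding sums_unique[OF sums_odd_zeta_minus_1[OF assms]]
    by (rule sum_le_suminf[OF sums_summable[OF sums_odd_zeta_minus_1[OF assms]]]) auto
  finally show ?thesis .
qed

lemma dirichlet_inverse_at_1:
  assumes "is_dirichlet_inverse f g" "f 1 = 1"
  shows "g 1 = 1"
  using assms unfolding is_dirichlet_inverse_def by auto

lemma dirichlet_inverse_recurrence:
  assumes "is_dirichlet_inverse f g" "f 1 = 1" "n \<ge> 2"
  shows "g n = - (\<Sum>d | d dvd n \<and> d \<noteq> 1. f d * g (n div d))"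
proof -
  have fin: "finite {d. d dvd n}"
    using assms(3) by simp
  have "0 = (\<Sum>d | d dvd n. f (n div d) * g d)"
    using assms unfolding is_dirichlet_inverse_def by auto
  also have "\<dots> = (\<Sum>d | d dvd n. f d * g (n div d))"
    using assms(3) by (intro sum.reindex_bij_witness[of _ "(div) n" "(div) n"])
      (auto simp: div_div_eq_right)
  also have "\<dots> = f 1 * g (n div 1) + (\<Sum>d | d dvd n \<and> d \<noteq> 1. f d * g (n div d))"
    using sum.remove[OF fin, of 1 "\<lambda>d. f d * g (n div d)"] by (simp add: set_diff_eq conj_commute)
  finally show ?thesis
    using assms(2) by simp
qed

lemma dirichlet_inverse_powr_bound:
  fixes f g w :: "nat \<Rightarrow> real"
  assumes inv: "is_dirichlet_inverse f g" and f1: "f 1 = 1"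
    and f_bound: "\<And>m. m \<ge> 2 \<Longrightarrow> \<bar>f m\<bar> \<le> w m * real m powr \<gamma>"
    and w_sum: "\<And>n. (\<Sum>m=2..n. w m / real m powr \<sigma>) \<le> 1"
    and "n \<ge> 1"
  shows "\<bar>g n\<bar> \<le> real n powr (\<gamma> + \<sigma>)"
  using \<open>n \<ge> 1\<close>
proof (induction n rule: less_induct)
  case (less n)
  show ?case
  proof (cases "n = 1")
    case True
    then show ?thesis
      using dirichlet_inverse_at_1[OF inv f1] by simp
  next
    case False
    with less.prems have n: "n \<ge> 2"
      by simp
    define D where "D = {d. d dvd n \<and> d \<noteq> 1}"
    have D_sub: "D \<subseteq> {2..n}"
    proof
      fix d
      assume "d \<in> D"
      then have "d dvd n" "d \<noteq> 1" "d \<noteq> 0"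
        using n by (auto simp: D_def intro!: gr0I)
      then show "d \<in> {2..n}"
        using n by (auto dest: dvd_imp_le)
    qed
    have w_nonneg: "0 \<le> w m" if "m \<ge> 2" for m
    proof -
      have "0 \<le> w m * real m powr \<gamma>"
        using f_bound[OF that] abs_ge_zero[of "f m"] by linarith
      then show ?thesis
        using that by (simp add: zero_le_mult_iff)
    qed
    have term_bound: "\<bar>f d * g (n div d)\<bar> \<le> real n powr (\<gamma> + \<sigma>) * (w d / real d powr \<sigma>)"
      if "d \<in> D" for d
    proof -
      from that D_sub have d: "d \<ge> 2" "d dvd n"
        by (auto simp: D_def)
      then have "n div d < n" "n div d \<ge> 1" and n_eq: "real n = real d * real (n div d)"
        using n by (auto elim!: dvdE simp: Suc_le_eq intro!: gr0I)
      have "\<bar>f d * g (n div d)\<bar> \<le> (w d * real d powr \<gamma>) * real (n div d) powr (\<gamma> + \<sigma>)"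
        unfolding abs_mult using f_bound[OF d(1)] less.IH[OF \<open>n div d < n\<close> \<open>n div d \<ge> 1\<close>]
        by (intro mult_mono) auto
      also have "\<dots> = real n powr (\<gamma> + \<sigma>) * (w d / real d powr \<sigma>)"
        using d(1) unfolding n_eq by (simp add: powr_mult powr_add field_simps)
      finally show ?thesis .
    qed
    have "\<bar>g n\<bar> = \<bar>\<Sum>d\<in>D. f d * g (n div d)\<bar>"
      using dirichlet_inverse_recurrence[OF inv f1 n] by (simp add: D_def)
    also have "\<dots> \<le> (\<Sum>d\<in>D. \<bar>f d * g (n div d)\<bar>)"
      by (rule sum_abs)
    also have "\<dots> \<le> (\<Sum>d\<in>D. real n powr (\<gamma> + \<sigma>) * (w d / real d powr \<sigma>))"
      by (intro sum_mono term_bound)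
    also have "\<dots> = real n powr (\<gamma> + \<sigma>) * (\<Sum>d\<in>D. w d / real d powr \<sigma>)"
      by (simp add: sum_distrib_left)
    also have "\<dots> \<le> real n powr (\<gamma> + \<sigma>) * (\<Sum>m=2..n. w m / real m powr \<sigma>)"
      using D_sub w_nonneg by (intro mult_left_mono sum_mono2) auto
    also have "\<dots> \<le> real n powr (\<gamma> + \<sigma>)"
      using w_sum[of n] by (intro mult_left_le) auto
    finally show ?thesis .
  qed
qed

theorem proposition3p17:
  fixes f :: "nat \<Rightarrow> real" and C \<gamma> :: real
  assumes f1: "f 1 = 1"
    and feven: "\<And>n. even n \<Longrightarrow> f n = 0"
    and Cpos: "C > 0"
    and fbound: "\<And>n. n \<ge> 2 \<Longrightarrow> \<bar>f n\<bar> \<le> C * real n powr \<gamma>"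
  shows "(\<exists>!\<sigma>. \<sigma> > 1 \<and> (1 - 2 powr (-\<sigma>)) * zeta_real \<sigma> = 1 / C + 1)
    \<and> (\<forall>\<sigma> g. \<sigma> > 1 \<and> (1 - 2 powr (-\<sigma>)) * zeta_real \<sigma> = 1 / C + 1
            \<and> is_dirichlet_inverse f g
          \<longrightarrow> (\<forall>n\<ge>2. \<bar>g n\<bar> \<le> real n powr (\<gamma> + \<sigma>)))"
proof (intro conjI allI impI)
  have root_iff: "\<sigma> > 1 \<and> (1 - 2 powr (-\<sigma>)) * zeta_real \<sigma> = 1 / C + 1
      \<longleftrightarrow> \<sigma> > 1 \<and> odd_zeta \<sigma> = 1 / C + 1" for \<sigma>
    using odd_zeta_eq_zeta_real[of \<sigma>] by auto
  show "\<exists>!\<sigma>. \<sigma> > 1 \<and> (1 - 2 powr (-\<sigma>)) * zeta_real \<sigma> = 1 / C + 1"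
    unfolding root_iff using Cpos by (intro odd_zeta_eq_unique) simp
  fix \<sigma> g and n :: nat
  assume "\<sigma> > 1 \<and> (1 - 2 powr (-\<sigma>)) * zeta_real \<sigma> = 1 / C + 1 \<and> is_dirichlet_inverse f g"
    and "n \<ge> 2"
  then have \<sigma>: "\<sigma> > 1" "odd_zeta \<sigma> = 1 / C + 1" and inv: "is_dirichlet_inverse f g"
    using root_iff by auto
  define w where "w m = C * of_bool (odd m)" for m :: nat
  have f_bound: "\<bar>f m\<bar> \<le> w m * real m powr \<gamma>" if "m \<ge> 2" for m
    using fbound[OF that] feven[of m] by (auto simp: w_def)
  have w_sum: "(\<Sum>m=2..k. w m / real m powr \<sigma>) \<le> 1" for k
    using mult_left_mono[OF sum_odd_powr_le_odd_zeta[OF \<sigma>(1), of k], of C] \<sigma>(2) Cpos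
    by (simp add: w_def sum_distrib_left)
  show "\<bar>g n\<bar> \<le> real n powr (\<gamma> + \<sigma>)"
    using dirichlet_inverse_powr_bound[OF inv f1 f_bound w_sum] \<open>n \<ge> 2\<close> by simp
qed

end
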